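(* Let $m\ge 38$ and let $G$ be a graph with maximum spectral radius among all $H(4,3)$-free graphs with $m$ edges and no isolated vertices (such a $G$ is connected). Let $\mathbf{x}$ be the Perron vector of $A(G)$, let $u^*$ be a vertex with $x_{u^*} = \max_{u\in V(G)} x_u$, and let $W = V(G)\setminus N[u^*]$. Then $d(w)\ge 2$ for every $w\in W$.
   Context: All graphs are simple and undirected; $A(G)$ is the adjacency matrix, $\rho(G)$ its largest eigenvalue, and the Perron vector is the unique positive unit eigenvector for $\rho(G)$ of a connected graph. $H(4,3)$ is the graph formed by a cycle of length $4$ and a triangle sharing exactly one common vertex. $N(v)$ is the neighbourhood of $v$, $N[v]=N(v)\cup\{v\}$, and $d(v)$ is the degree of $v$. *)

theory Defs
  imports Main "HOL-Analysis.Analysis"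
begin

text \<open>A finite simple graph is given by a vertex set V and an edge set E of
2-element subsets of V.  Vertices are natural numbers (every finite graph is
isomorphic to such a graph).\<close>

definition simple_graph :: "nat set \<Rightarrow> nat set set \<Rightarrow> bool" where
  "simple_graph V E \<longleftrightarrow> finite V \<and> (\<forall>e\<in>E. \<exists>u v. e = {u, v} \<and> u \<noteq> v \<and> u \<in> V \<and> v \<in> V)"

definition nbrs :: "nat set set \<Rightarrow> nat \<Rightarrow> nat set" where
  "nbrs E v = {u. {u, v} \<in> E}"

definition closed_nbrs :: "nat set set \<Rightarrow> nat \<Rightarrow> nat set" where
  "closed_nbrs E v = insert v (nbrs E v)"

definition degree :: "nat set set \<Rightarrow> nat \<Rightarrow> nat" where
  "degree E v = card (nbrs E v)"

definition no_isolated :: "nat set \<Rightarrow> nat set set \<Rightarrow> bool" where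
  "no_isolated V E \<longleftrightarrow> (\<forall>v\<in>V. \<exists>e\<in>E. v \<in> e)"

definition adj_matrix :: "nat set set \<Rightarrow> nat \<Rightarrow> nat \<Rightarrow> real" where
  "adj_matrix E u v = (if {u, v} \<in> E then 1 else 0)"

definition is_eigenvector :: "nat set \<Rightarrow> nat set set \<Rightarrow> real \<Rightarrow> (nat \<Rightarrow> real) \<Rightarrow> bool" where
  "is_eigenvector V E lam x \<longleftrightarrow>
     (\<forall>v. v \<notin> V \<longrightarrow> x v = 0) \<and> (\<exists>v\<in>V. x v \<noteq> 0) \<and>
     (\<forall>v\<in>V. (\<Sum>u\<in>V. adj_matrix E v u * x u) = lam * x v)"

definition is_eigenvalue :: "nat set \<Rightarrow> nat set set \<Rightarrow> real \<Rightarrow> bool" where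
  "is_eigenvalue V E lam \<longleftrightarrow> (\<exists>x. is_eigenvector V E lam x)"

definition spectral_radius :: "nat set \<Rightarrow> nat set set \<Rightarrow> real" where
  "spectral_radius V E = Max {lam. is_eigenvalue V E lam}"

definition perron_vector :: "nat set \<Rightarrow> nat set set \<Rightarrow> (nat \<Rightarrow> real) \<Rightarrow> bool" where
  "perron_vector V E x \<longleftrightarrow>
     is_eigenvector V E (spectral_radius V E) x \<and> (\<forall>v\<in>V. x v > 0) \<and>
     (\<Sum>v\<in>V. (x v)\<^sup>2) = 1"

text \<open>G contains H(4,3) (a 4-cycle c,a1,a2,a3 and a triangle c,b1,b2 sharing
only the vertex c) as a (not necessarily induced) subgraph.\<close>
definition contains_H43 :: "nat set \<Rightarrow> nat set set \<Rightarrow> bool" where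
  "contains_H43 V E \<longleftrightarrow> (\<exists>c a1 a2 a3 b1 b2.
     distinct [c, a1, a2, a3, b1, b2] \<and> set [c, a1, a2, a3, b1, b2] \<subseteq> V \<and>
     {c, a1} \<in> E \<and> {a1, a2} \<in> E \<and> {a2, a3} \<in> E \<and> {a3, c} \<in> E \<and>
     {c, b1} \<in> E \<and> {b1, b2} \<in> E \<and> {b2, c} \<in> E)"

definition H43_free :: "nat set \<Rightarrow> nat set set \<Rightarrow> bool" where
  "H43_free V E \<longleftrightarrow> \<not> contains_H43 V E"

definition admissible :: "nat \<Rightarrow> nat set \<Rightarrow> nat set set \<Rightarrow> bool" where
  "admissible m V E \<longleftrightarrow> simple_graph V E \<and> card E = m \<and> no_isolated V E \<and> H43_free V E"

end

theory Submission
  imports Defs "HOL-Library.Function_Algebras"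
begin

text \<open>Suppose some \<open>w\<close> outside \<open>N[u\<^sup>*]\<close> had degree at most one. Having no isolated
  vertices, \<open>w\<close> is then a pendant vertex with a unique neighbour \<open>v\<close>. Rotate the edge \<open>wv\<close> to
  \<open>wu\<^sup>*\<close>: the new graph still has \<open>m\<close> edges, and it is still \<open>H(4,3)\<close>-free because \<open>w\<close>
  is still pendant while every vertex of a copy of \<open>H(4,3)\<close> has degree two in it, so a copy
  would avoid \<open>w\<close> and already lie in \<open>G\<close>. Since \<open>x\<^sub>v \<le> x\<^sub>u\<^sub>*\<close>, the Rayleigh quotient of \<open>x\<close> does not
  decrease, so \<open>\<rho>(G') \<ge> \<rho>(G)\<close>. Equality would make \<open>x\<close> a \<open>\<rho>\<close>-eigenvector of \<open>G'\<close>, which is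
  impossible at \<open>u\<^sup>*\<close>, where \<open>(A(G') x)\<^sub>u\<^sub>* = \<rho> x\<^sub>u\<^sub>* + x\<^sub>w\<close>. So \<open>\<rho>(G') > \<rho>(G)\<close>,
  contradicting the maximality of \<open>G\<close>.

  The variational characterisation of \<open>\<rho>\<close> is derived from the definition as the largest
  eigenvalue: by compactness the Rayleigh quotient attains its maximum, and a maximiser is an
  eigenvector.\<close>

section \<open>Rayleigh quotients of symmetric matrices\<close>

definition bilinear_form :: "'a set \<Rightarrow> ('a \<Rightarrow> 'a \<Rightarrow> real) \<Rightarrow> ('a \<Rightarrow> real) \<Rightarrow> ('a \<Rightarrow> real) \<Rightarrow> real" where
  "bilinear_form S M u v = (\<Sum>a\<in>S. \<Sum>b\<in>S. M a b * u a * v b)"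

definition sum_sq :: "'a set \<Rightarrow> ('a \<Rightarrow> real) \<Rightarrow> real" where
  "sum_sq S z = (\<Sum>a\<in>S. (z a)\<^sup>2)"

lemma sum_sq_nonneg: "sum_sq S z \<ge> 0"
  unfolding sum_sq_def by (intro sum_nonneg) simp

lemma sum_sq_eq_0_iff:
  assumes "finite S"
  shows "sum_sq S z = 0 \<longleftrightarrow> (\<forall>a\<in>S. z a = 0)"
  unfolding sum_sq_def using assms by (simp add: sum_nonneg_eq_0_iff)

lemma bilinear_form_commute:
  assumes "\<And>a b. M a b = M b a"
  shows "bilinear_form S M u v = bilinear_form S M v u"
  unfolding bilinear_form_def
  by (subst sum.swap) (simp add: assms mult.commute mult.left_commute)

lemma bilinear_form_eigen:
  assumes "\<forall>a\<in>S. (\<Sum>b\<in>S. M a b * v b) = \<mu> * v a"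
  shows "bilinear_form S M u v = \<mu> * (\<Sum>a\<in>S. u a * v a)"
proof -
  have "bilinear_form S M u v = (\<Sum>a\<in>S. u a * (\<Sum>b\<in>S. M a b * v b))"
    unfolding bilinear_form_def by (simp add: sum_distrib_left ac_simps)
  also have "\<dots> = (\<Sum>a\<in>S. u a * (\<mu> * v a))" using assms by simp
  finally show ?thesis by (simp add: sum_distrib_left ac_simps)
qed

lemma bilinear_form_add:
  "bilinear_form S (\<lambda>a b. M a b + N a b) u v = bilinear_form S M u v + bilinear_form S N u v"
  unfolding bilinear_form_def by (simp add: algebra_simps sum.distrib)

lemma bilinear_form_diff:
  "bilinear_form S (\<lambda>a b. M a b - N a b) u v = bilinear_form S M u v - bilinear_form S N u v"
  unfolding bilinear_form_def by (simp add: algebra_simps sum_subtractf)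

lemma bilinear_form_mono_neutral:
  assumes "finite S" "T \<subseteq> S" "\<And>a b. a \<in> S - T \<or> b \<in> S - T \<Longrightarrow> M a b = 0"
  shows "bilinear_form T M u v = bilinear_form S M u v"
proof -
  have "bilinear_form T M u v = (\<Sum>a\<in>T. \<Sum>b\<in>S. M a b * u a * v b)"
    unfolding bilinear_form_def
    by (intro sum.cong refl sum.mono_neutral_left) (use assms finite_subset in auto)
  also have "\<dots> = bilinear_form S M u v"
    unfolding bilinear_form_def by (intro sum.mono_neutral_left) (use assms in auto)
  finally show ?thesis .
qed

lemma bilinear_form_along_line:
  "bilinear_form S M (\<lambda>a. y a + t * r a) (\<lambda>a. y a + t * r a) =
     bilinear_form S M y y + t * bilinear_form S M r y + t * bilinear_form S M y r
       + t\<^sup>2 * bilinear_form S M r r"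
  unfolding bilinear_form_def power2_eq_square
  by (simp add: algebra_simps sum.distrib sum_distrib_left)

lemma sum_sq_along_line:
  "sum_sq S (\<lambda>a. y a + t * r a) = sum_sq S y + 2 * t * (\<Sum>a\<in>S. r a * y a) + t\<^sup>2 * sum_sq S r"
  unfolding sum_sq_def power2_eq_square
  by (simp add: algebra_simps sum.distrib sum_distrib_left)

lemma rayleigh_maximizer_exists:
  assumes "finite S" and "S \<noteq> {}"
  shows "\<exists>y. sum_sq S y = 1 \<and> (\<forall>z. bilinear_form S M z z \<le> bilinear_form S M y y * sum_sq S z)"
proof -
  let ?T = "product_topology (\<lambda>_. euclideanreal) S"
  let ?Q = "\<lambda>f. bilinear_form S M f f"
  define K where "K = {f \<in> PiE S (\<lambda>_. {-1..1::real}). sum_sq S f = 1}"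
  have "continuous_map ?T euclideanreal ?Q"
    unfolding bilinear_form_def using assms(1)
    by (intro continuous_map_sum continuous_map_real_mult continuous_map_const[THEN iffD2] disjI2
        continuous_map_product_projection) auto
  moreover have "compactin ?T K"
  proof (rule closed_compactin)
    show "compactin ?T (PiE S (\<lambda>_. {-1..1}))"
      by (simp add: compactin_PiE)
    have "continuous_map ?T euclideanreal (sum_sq S)"
      unfolding sum_sq_def using assms(1)
      by (intro continuous_map_sum continuous_map_real_pow continuous_map_product_projection) auto
    then have "closedin ?T {f \<in> topspace ?T. sum_sq S f \<in> {1}}"
      by (rule closedin_continuous_map_preimage) simp
    moreover have "closedin ?T (PiE S (\<lambda>_. {-1..1}))"
      by (simp add: closedin_product_topology)
    moreover have "K = {f \<in> topspace ?T. sum_sq S f \<in> {1}} \<inter> PiE S (\<lambda>_. {-1..1})"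
      by (auto simp: K_def)
    ultimately show "closedin ?T K"
      by (simp add: closedin_Int)
  qed (auto simp: K_def)
  ultimately have "compact (?Q ` K)"
    using image_compactin by fastforce
  moreover have "K \<noteq> {}"
  proof -
    obtain a0 where "a0 \<in> S" using assms(2) by auto
    have "sum_sq S (\<lambda>a\<in>S. if a = a0 then 1 else 0) = (\<Sum>a\<in>S. if a = a0 then 1 else 0)"
      unfolding sum_sq_def by (intro sum.cong) auto
    then have "(\<lambda>a\<in>S. if a = a0 then 1 else 0) \<in> K"
      using assms(1) \<open>a0 \<in> S\<close> by (simp add: K_def)
    then show ?thesis by blast
  qed
  ultimately obtain y where y: "y \<in> K" and y_max: "\<And>f. f \<in> K \<Longrightarrow> ?Q f \<le> ?Q y"
    using compact_attains_sup[of "?Q ` K"] by blast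
  have "?Q z \<le> ?Q y * sum_sq S z" for z
  proof (cases "sum_sq S z = 0")
    case True
    then have "?Q z = 0"
      using assms(1) by (simp add: sum_sq_eq_0_iff bilinear_form_def)
    then show ?thesis using True by simp
  next
    case False
    then have pos: "sum_sq S z > 0" using sum_sq_nonneg[of S z] by linarith
    define f where "f = (\<lambda>a\<in>S. z a / sqrt (sum_sq S z))"
    have f_unit: "sum_sq S f = 1"
      using pos by (simp add: sum_sq_def f_def power_divide sum_divide_distrib[symmetric])
    have "(f a)\<^sup>2 \<le> 1" if "a \<in> S" for a
      using member_le_sum[of a S "\<lambda>a. (f a)\<^sup>2"] assms(1) that f_unit by (simp add: sum_sq_def)
    then have "\<forall>a\<in>S. f a \<in> {-1..1}"
      by (simp add: abs_square_le_1 abs_le_iff)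
    moreover have "f \<in> extensional S" by (simp add: f_def)
    ultimately have "f \<in> K"
      using f_unit by (simp add: K_def PiE_iff)
    then have "?Q f \<le> ?Q y" by (rule y_max)
    moreover have "?Q f = ?Q z / sum_sq S z"
      using pos unfolding bilinear_form_def f_def
      by (simp add: sum_divide_distrib[symmetric] real_sqrt_mult[symmetric] sum_sq_def)
    ultimately show ?thesis using pos by (simp add: divide_le_eq)
  qed
  then show ?thesis using y by (auto simp: K_def)
qed

lemma quadratic_nonpos_imp_linear_coeff_zero:
  fixes R c :: real
  assumes "\<And>t. 2 * t * R + t\<^sup>2 * c \<le> 0"
  shows "R = 0"
proof (rule ccontr)
  assume "R \<noteq> 0"
  define t where "t = R / (\<bar>c\<bar> + 1)"
  have "t * R = R\<^sup>2 / (\<bar>c\<bar> + 1)"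
    by (simp add: t_def power2_eq_square)
  then have tR: "t * R > 0"
    using \<open>R \<noteq> 0\<close> by simp
  have "- (t\<^sup>2 * c) \<le> t\<^sup>2 * \<bar>c\<bar>"
    using mult_left_mono[OF abs_ge_minus_self[of c] zero_le_power2[of t]] by simp
  also have "\<dots> = t * R * (\<bar>c\<bar> / (\<bar>c\<bar> + 1))"
    by (simp add: t_def power2_eq_square)
  also have "\<dots> < t * R * 1"
    using tR by (intro mult_strict_left_mono) auto
  finally show False using assms[of t] tR by linarith
qed

text \<open>Moving from \<open>y\<close> to \<open>y + t r\<close> along the residual \<open>r = M y - \<mu> y\<close> raises
  \<open>z\<^sup>T M z - \<mu> \<parallel>z\<parallel>\<^sup>2\<close> at first order by \<open>2 t \<parallel>r\<parallel>\<^sup>2\<close>, so at a maximiser \<open>r = 0\<close>.\<close>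

lemma rayleigh_maximizer_eigen:
  assumes "finite S" and M_sym: "\<And>a b. M a b = M b a"
    and le: "\<And>z. bilinear_form S M z z \<le> \<mu> * sum_sq S z"
    and ge: "bilinear_form S M y y \<ge> \<mu> * sum_sq S y"
  shows "\<forall>a\<in>S. (\<Sum>b\<in>S. M a b * y b) = \<mu> * y a"
proof -
  define r where "r a = (\<Sum>b\<in>S. M a b * y b) - \<mu> * y a" for a
  have "bilinear_form S M r y - \<mu> * (\<Sum>a\<in>S. r a * y a) = sum_sq S r"
    unfolding bilinear_form_def sum_sq_def r_def power2_eq_square
    by (simp add: sum_distrib_left sum_subtractf[symmetric] algebra_simps)
  moreover have "2 * t * (bilinear_form S M r y - \<mu> * (\<Sum>a\<in>S. r a * y a))
      + t\<^sup>2 * (bilinear_form S M r r - \<mu> * sum_sq S r) \<le> 0" for t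
    using le[of "\<lambda>a. y a + t * r a"] ge bilinear_form_commute[of M S y r, OF M_sym]
    unfolding bilinear_form_along_line sum_sq_along_line by (simp add: algebra_simps)
  ultimately have "sum_sq S r = 0"
    by (intro quadratic_nonpos_imp_linear_coeff_zero) simp
  then show ?thesis
    using assms(1) by (simp add: sum_sq_eq_0_iff r_def)
qed

lemma finite_orthogonal_family:
  fixes F :: "('a \<Rightarrow> real) set"
  assumes "finite S"
    and supp: "\<And>f i. f \<in> F \<Longrightarrow> i \<notin> S \<Longrightarrow> f i = 0"
    and orth: "\<And>f g. f \<in> F \<Longrightarrow> g \<in> F \<Longrightarrow> f \<noteq> g \<Longrightarrow> (\<Sum>a\<in>S. f a * g a) = 0"
    and nonzero: "\<And>f. f \<in> F \<Longrightarrow> \<exists>a\<in>S. f a \<noteq> 0"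
  shows "finite F"
proof -
  interpret fun_space: vector_space "\<lambda>(c::real) (f::'a \<Rightarrow> real) i. c * f i"
    by unfold_locales (auto simp: fun_eq_iff algebra_simps)
  have sum_apply: "(\<Sum>v\<in>T. g v) i = (\<Sum>v\<in>T. g v i)" if "finite T" for T and g :: "_ \<Rightarrow> 'a \<Rightarrow> real" and i
    using that by (induction T rule: finite_induct) auto
  define \<delta> where "\<delta> a i = (if i = a then 1 else (0::real))" for a i :: 'a
  have "F \<subseteq> fun_space.span (\<delta> ` S)"
  proof
    fix f assume "f \<in> F"
    have "f = (\<Sum>a\<in>S. (\<lambda>i. f a * \<delta> a i))"
    proof
      fix i
      have "(\<Sum>a\<in>S. (\<lambda>i. f a * \<delta> a i)) i = (\<Sum>a\<in>S. if i = a then f a else 0)"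
        using \<open>finite S\<close> by (simp add: sum_apply \<delta>_def if_distrib cong: if_cong)
      also have "\<dots> = f i" using \<open>finite S\<close> supp[OF \<open>f \<in> F\<close>] by auto
      finally show "f i = (\<Sum>a\<in>S. (\<lambda>i. f a * \<delta> a i)) i" by simp
    qed
    also have "\<dots> \<in> fun_space.span (\<delta> ` S)"
      by (intro fun_space.span_sum fun_space.span_scale fun_space.span_base) auto
    finally show "f \<in> fun_space.span (\<delta> ` S)" .
  qed
  moreover have "fun_space.independent F"
    unfolding fun_space.independent_explicit_finite_subsets
  proof (intro allI impI ballI)
    fix T u f
    assume T: "T \<subseteq> F" "finite T" and comb: "(\<Sum>g\<in>T. (\<lambda>i. u g * g i)) = 0" and "f \<in> T"
    have "0 = (\<Sum>a\<in>S. f a * (\<Sum>g\<in>T. u g * g a))"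
      using fun_cong[OF comb] T(2) by (simp add: sum_apply)
    also have "\<dots> = (\<Sum>g\<in>T. u g * (\<Sum>a\<in>S. f a * g a))"
      by (simp add: sum_distrib_left ac_simps sum.swap[of _ S])
    also have "\<dots> = u f * (\<Sum>a\<in>S. f a * f a) + (\<Sum>g\<in>T - {f}. u g * (\<Sum>a\<in>S. f a * g a))"
      using T \<open>f \<in> T\<close> by (simp add: sum.remove)
    also have "(\<Sum>g\<in>T - {f}. u g * (\<Sum>a\<in>S. f a * g a)) = 0"
      using \<open>f \<in> T\<close> T(1) orth by (intro sum.neutral ballI) (metis DiffE insertCI mult_zero_right subsetD)
    finally have "u f * (\<Sum>a\<in>S. f a * f a) = 0" by simp
    moreover have "(\<Sum>a\<in>S. f a * f a) \<noteq> 0"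
      using nonzero[of f] T \<open>f \<in> T\<close> \<open>finite S\<close>
      by (auto simp: sum_nonneg_eq_0_iff)
    ultimately show "u f = 0" by simp
  qed
  ultimately show ?thesis
    using fun_space.independent_span_bound \<open>finite S\<close> by blast
qed

section \<open>The spectral radius of a graph\<close>

lemma adj_matrix_commute: "adj_matrix E a b = adj_matrix E b a"
  unfolding adj_matrix_def by (simp add: insert_commute)

lemma eigenvector_eigenvalue_unique:
  assumes "is_eigenvector V E \<mu> x" and "is_eigenvector V E \<nu> x"
  shows "\<mu> = \<nu>"
proof -
  obtain v where "v \<in> V" "x v \<noteq> 0"
    using assms(1) by (auto simp: is_eigenvector_def)
  then show ?thesis
    using assms by (auto simp: is_eigenvector_def)
qed

lemma eigenvectors_orthogonal:
  assumes "is_eigenvector V E \<mu> x" and "is_eigenvector V E \<nu> y" and "\<mu> \<noteq> \<nu>"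
  shows "(\<Sum>a\<in>V. x a * y a) = 0"
proof -
  have "\<nu> * (\<Sum>a\<in>V. x a * y a) = bilinear_form V (adj_matrix E) x y"
    using assms(2) bilinear_form_eigen[of V "adj_matrix E" y \<nu> x]
    by (simp add: is_eigenvector_def)
  also have "\<dots> = bilinear_form V (adj_matrix E) y x"
    by (rule bilinear_form_commute[OF adj_matrix_commute])
  also have "\<dots> = \<mu> * (\<Sum>a\<in>V. x a * y a)"
    using assms(1) bilinear_form_eigen[of V "adj_matrix E" x \<mu> y]
    by (simp add: is_eigenvector_def mult.commute)
  finally show ?thesis using assms(3) by simp
qed

lemma finite_eigenvalues:
  assumes "finite V"
  shows "finite {\<mu>. is_eigenvalue V E \<mu>}"
proof -
  define L where "L = {\<mu>. is_eigenvalue V E \<mu>}"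
  define vec where "vec \<mu> = (SOME x. is_eigenvector V E \<mu> x)" for \<mu>
  have vec: "is_eigenvector V E \<mu> (vec \<mu>)" if "\<mu> \<in> L" for \<mu>
    using that someI_ex[of "is_eigenvector V E \<mu>"] by (simp add: L_def vec_def is_eigenvalue_def)
  have "inj_on vec L"
    by (rule inj_onI) (metis vec eigenvector_eigenvalue_unique)
  moreover have "finite (vec ` L)"
  proof (rule finite_orthogonal_family[OF assms])
    show "\<And>f i. f \<in> vec ` L \<Longrightarrow> i \<notin> V \<Longrightarrow> f i = 0"
      and "\<And>f. f \<in> vec ` L \<Longrightarrow> \<exists>a\<in>V. f a \<noteq> 0"
      using vec by (auto simp: is_eigenvector_def)
    show "\<And>f g. f \<in> vec ` L \<Longrightarrow> g \<in> vec ` L \<Longrightarrow> f \<noteq> g \<Longrightarrow> (\<Sum>a\<in>V. f a * g a) = 0"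
      using vec eigenvectors_orthogonal by blast
  qed
  ultimately show ?thesis
    unfolding L_def[symmetric] using finite_imageD by blast
qed

lemma rayleigh_le_spectral_radius:
  assumes "finite V"
  shows "bilinear_form V (adj_matrix E) z z \<le> spectral_radius V E * sum_sq V z"
proof (cases "V = {}")
  case True
  then show ?thesis by (simp add: bilinear_form_def sum_sq_def)
next
  case False
  obtain y where y_unit: "sum_sq V y = 1" and y_max:
    "\<And>z. bilinear_form V (adj_matrix E) z z \<le> bilinear_form V (adj_matrix E) y y * sum_sq V z"
    using rayleigh_maximizer_exists[OF assms False] by blast
  define \<mu> where "\<mu> = bilinear_form V (adj_matrix E) y y"
  have "\<forall>a\<in>V. (\<Sum>b\<in>V. adj_matrix E a b * y b) = \<mu> * y a"
    unfolding \<mu>_def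
    by (rule rayleigh_maximizer_eigen[OF assms adj_matrix_commute y_max]) (simp add: y_unit)
  moreover have "\<exists>v\<in>V. y v \<noteq> 0"
    using y_unit sum_sq_eq_0_iff[OF assms, of y] by auto
  ultimately have "is_eigenvector V E \<mu> (\<lambda>a. if a \<in> V then y a else 0)"
    unfolding is_eigenvector_def by (simp cong: sum.cong)
  then have "\<mu> \<le> spectral_radius V E"
    unfolding spectral_radius_def
    by (intro Max_ge[OF finite_eigenvalues[OF assms]]) (auto simp: is_eigenvalue_def)
  then have "\<mu> * sum_sq V z \<le> spectral_radius V E * sum_sq V z"
    by (simp add: mult_right_mono sum_sq_nonneg)
  then show ?thesis
    using y_max[of z] unfolding \<mu>_def by linarith
qed

lemma rayleigh_ge_spectral_radius_imp_eigen:
  assumes "finite V"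
    and "bilinear_form V (adj_matrix E) z z \<ge> spectral_radius V E * sum_sq V z"
  shows "\<forall>a\<in>V. (\<Sum>b\<in>V. adj_matrix E a b * z b) = spectral_radius V E * z a"
  by (rule rayleigh_maximizer_eigen[OF assms(1) adj_matrix_commute
        rayleigh_le_spectral_radius[OF assms(1)] assms(2)])

lemma perron_vector_rayleigh:
  assumes "perron_vector V E x"
  shows "bilinear_form V (adj_matrix E) x x = spectral_radius V E"
  using assms bilinear_form_eigen[of V "adj_matrix E" x "spectral_radius V E" x]
  by (simp add: perron_vector_def is_eigenvector_def power2_eq_square)

lemma perron_spectral_radius_nonneg:
  assumes "perron_vector V E x"
  shows "spectral_radius V E \<ge> 0"
proof -
  have "bilinear_form V (adj_matrix E) x x \<ge> 0"
    using assms unfolding bilinear_form_def adj_matrix_def perron_vector_def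
    by (intro sum_nonneg) (auto intro!: mult_nonneg_nonneg less_imp_le)
  then show ?thesis using perron_vector_rayleigh[OF assms] by simp
qed

lemma adj_matrix_insert:
  "e \<notin> E \<Longrightarrow> adj_matrix (insert e E) a b = adj_matrix E a b + adj_matrix {e} a b"
  by (auto simp: adj_matrix_def)

lemma adj_matrix_remove:
  "e \<in> E \<Longrightarrow> adj_matrix (E - {e}) a b = adj_matrix E a b - adj_matrix {e} a b"
  by (auto simp: adj_matrix_def)

lemma adj_matrix_edge:
  "adj_matrix {{p, q}} a b = (if a = p \<and> b = q \<or> a = q \<and> b = p then 1 else 0)"
  by (auto simp: adj_matrix_def doubleton_eq_iff)

lemma bilinear_form_adj_edge:
  assumes "finite S" "p \<in> S" "q \<in> S" "p \<noteq> q"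
  shows "bilinear_form S (adj_matrix {{p, q}}) x x = 2 * x p * x q"
proof -
  have "adj_matrix {{p, q}} a b * x a * x b =
      (if b = q then if a = p then x p * x q else 0 else 0)
      + (if b = p then if a = q then x p * x q else 0 else 0)" for a b
    using assms(4) by (auto simp: adj_matrix_edge)
  then show ?thesis
    using assms by (simp add: bilinear_form_def sum.distrib)
qed

lemma adj_matrix_edge_row:
  assumes "finite S" "q \<in> S" "p \<noteq> q"
  shows "(\<Sum>b\<in>S. adj_matrix {{p, q}} p b * x b) = x q"
proof -
  have "(\<Sum>b\<in>S. adj_matrix {{p, q}} p b * x b) = (\<Sum>b\<in>S. if b = q then x q else 0)"
    using assms(3) by (intro sum.cong refl) (auto simp: adj_matrix_edge)
  then show ?thesis using assms by simp
qed

section \<open>Edge rotation and the spectral radius\<close>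

definition rotate_edge :: "nat set set \<Rightarrow> nat \<Rightarrow> nat \<Rightarrow> nat \<Rightarrow> nat set set" where
  "rotate_edge E w v u = insert {w, u} (E - {{w, v}})"

text \<open>Rotating \<open>wv\<close> away may leave \<open>v\<close> isolated, so the rotated graph is taken on the
  non-isolated vertices.\<close>

definition nonisolated_vertices :: "nat set \<Rightarrow> nat set set \<Rightarrow> nat set" where
  "nonisolated_vertices V E = {a \<in> V. \<exists>e\<in>E. a \<in> e}"

lemma simple_graph_edgeD:
  assumes "simple_graph V E" "{a, b} \<in> E"
  shows "a \<in> V" "b \<in> V" "a \<noteq> b"
proof -
  obtain p q where "{a, b} = {p, q}" "p \<noteq> q" "p \<in> V" "q \<in> V"
    using assms by (auto simp: simple_graph_def)
  then show "a \<in> V" "b \<in> V" "a \<noteq> b"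
    by (auto simp: doubleton_eq_iff)
qed

lemma adj_matrix_rotate_edge:
  assumes "{w, v} \<in> E" "{w, u} \<notin> E"
  shows "adj_matrix (rotate_edge E w v u) a b
    = adj_matrix E a b - adj_matrix {{w, v}} a b + adj_matrix {{w, u}} a b"
proof -
  have "adj_matrix (rotate_edge E w v u) a b = adj_matrix (E - {{w, v}}) a b + adj_matrix {{w, u}} a b"
    unfolding rotate_edge_def by (rule adj_matrix_insert) (use assms(2) in simp)
  then show ?thesis using adj_matrix_remove[OF assms(1)] by simp
qed

lemma bilinear_form_rotate_edge:
  assumes G: "simple_graph V E" and "{w, v} \<in> E" "{w, u} \<notin> E" "u \<in> V" "u \<noteq> w"
  shows "bilinear_form V (adj_matrix (rotate_edge E w v u)) x x
    = bilinear_form V (adj_matrix E) x x + 2 * x w * (x u - x v)"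
proof -
  have "adj_matrix (rotate_edge E w v u)
      = (\<lambda>a b. adj_matrix E a b - adj_matrix {{w, v}} a b + adj_matrix {{w, u}} a b)"
    using adj_matrix_rotate_edge[OF assms(2,3)] by blast
  moreover have "finite V" using G by (simp add: simple_graph_def)
  ultimately show ?thesis
    using assms simple_graph_edgeD[OF G assms(2)]
    by (simp add: bilinear_form_add bilinear_form_diff bilinear_form_adj_edge algebra_simps)
qed

lemma adj_matrix_rotate_edge_row:
  assumes G: "simple_graph V E" and "{w, v} \<in> E" "{w, u} \<notin> E" "u \<noteq> w"
  shows "(\<Sum>b\<in>V. adj_matrix (rotate_edge E w v u) u b * x b)
    = (\<Sum>b\<in>V. adj_matrix E u b * x b) + x w"
proof -
  have "u \<noteq> v" "w \<in> V" "finite V"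
    using assms simple_graph_edgeD[OF G assms(2)] by (auto simp: simple_graph_def)
  then have "adj_matrix (rotate_edge E w v u) u b = adj_matrix E u b + adj_matrix {{u, w}} u b" for b
    using assms by (simp add: adj_matrix_rotate_edge adj_matrix_edge insert_commute)
  then show ?thesis
    using assms \<open>w \<in> V\<close> \<open>finite V\<close> adj_matrix_edge_row[of V w u x]
    by (simp add: algebra_simps sum.distrib)
qed

lemma bilinear_form_nonisolated:
  assumes "finite V"
  shows "bilinear_form (nonisolated_vertices V E) (adj_matrix E) x y = bilinear_form V (adj_matrix E) x y"
  using assms
  by (intro bilinear_form_mono_neutral) (auto simp: nonisolated_vertices_def adj_matrix_def)

lemma adj_matrix_row_nonisolated:
  assumes "finite V"
  shows "(\<Sum>b\<in>nonisolated_vertices V E. adj_matrix E a b * x b) = (\<Sum>b\<in>V. adj_matrix E a b * x b)"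
  using assms
  by (intro sum.mono_neutral_left) (auto simp: nonisolated_vertices_def adj_matrix_def)

text \<open>Rotating \<open>wv\<close> to \<open>wu\<close> with \<open>x\<^sub>v \<le> x\<^sub>u\<close> does not decrease the Rayleigh quotient of
  the Perron vector \<open>x\<close>; equal spectral radii would make \<open>x\<close> an eigenvector of the new graph,
  but its row at \<open>u\<close> has gained \<open>x\<^sub>w > 0\<close>.\<close>

lemma spectral_radius_rotate_edge_less:
  assumes G: "simple_graph V E" and x: "perron_vector V E x"
    and wv: "{w, v} \<in> E" and wu: "{w, u} \<notin> E" "u \<in> V" "u \<noteq> w" and "x v \<le> x u"
  defines "E' \<equiv> rotate_edge E w v u"
  shows "spectral_radius V E < spectral_radius (nonisolated_vertices V E') E'"
proof -
  define V' where "V' = nonisolated_vertices V E'"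
  define \<rho> where "\<rho> = spectral_radius V E"
  define \<rho>' where "\<rho>' = spectral_radius V' E'"
  have fin: "finite V" and "V' \<subseteq> V" "u \<in> V'"
    using G wu by (auto simp: simple_graph_def V'_def nonisolated_vertices_def E'_def rotate_edge_def)
  have w: "w \<in> V" "x w > 0"
    using simple_graph_edgeD[OF G wv] x by (auto simp: perron_vector_def)
  have "x u > 0" using x wu by (simp add: perron_vector_def)
  have "sum_sq V' x \<le> sum_sq V x"
    unfolding sum_sq_def using fin \<open>V' \<subseteq> V\<close> by (intro sum_mono2) auto
  also have "\<dots> = 1" using x by (simp add: perron_vector_def sum_sq_def)
  finally have "sum_sq V' x \<le> 1" .
  have row: "(\<Sum>b\<in>V'. adj_matrix E' u b * x b) = \<rho> * x u + x w"
    using adj_matrix_row_nonisolated[OF fin, of E' u x] adj_matrix_rotate_edge_row[OF G wv wu(1,3)]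
      x wu(2) unfolding V'_def E'_def \<rho>_def
    by (simp add: perron_vector_def is_eigenvector_def)
  have "\<not> \<rho>' \<le> \<rho>"
  proof
    assume "\<rho>' \<le> \<rho>"
    then have "\<rho>' * sum_sq V' x \<le> \<rho>"
      using \<open>sum_sq V' x \<le> 1\<close> perron_spectral_radius_nonneg[OF x] sum_sq_nonneg[of V' x]
      unfolding \<rho>_def by (meson mult_left_le mult_right_mono order_trans)
    also have "\<rho> \<le> bilinear_form V' (adj_matrix E') x x"
      using bilinear_form_rotate_edge[OF G wv wu, of x] bilinear_form_nonisolated[OF fin, of E' x x]
        perron_vector_rayleigh[OF x] w \<open>x v \<le> x u\<close>
      by (simp add: \<rho>_def V'_def E'_def)
    finally have "(\<Sum>b\<in>V'. adj_matrix E' u b * x b) = \<rho>' * x u"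
      using rayleigh_ge_spectral_radius_imp_eigen[of V' E' x] fin \<open>V' \<subseteq> V\<close> \<open>u \<in> V'\<close>
      unfolding \<rho>'_def by (meson finite_subset)
    moreover have "\<rho>' * x u \<le> \<rho> * x u"
      using \<open>\<rho>' \<le> \<rho>\<close> \<open>x u > 0\<close> by simp
    ultimately show False using row w by linarith
  qed
  then show ?thesis by (simp add: \<rho>_def \<rho>'_def V'_def)
qed

section \<open>Edge rotation and admissibility\<close>

lemma simple_graph_finite_edges:
  assumes "simple_graph V E"
  shows "finite E"
proof (rule finite_subset)
  show "E \<subseteq> Pow V" using assms by (auto simp: simple_graph_def)
  show "finite (Pow V)" using assms by (simp add: simple_graph_def)
qed

lemma pendant_vertex_edge:
  assumes G: "simple_graph V E" and "no_isolated V E" "w \<in> V" "degree E w < 2"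
  obtains v where "{w, v} \<in> E" "\<And>e. e \<in> E \<Longrightarrow> w \<in> e \<Longrightarrow> e = {w, v}"
proof -
  have edge_at_w: "\<exists>v. e = {w, v}" if "e \<in> E" "w \<in> e" for e
  proof -
    have "\<exists>p q. e = {p, q} \<and> p \<noteq> q \<and> p \<in> V \<and> q \<in> V"
      using G that(1) by (simp add: simple_graph_def)
    then obtain p q where "e = {p, q}" by blast
    then show ?thesis using that(2) by (cases "w = p") (auto simp: insert_commute)
  qed
  obtain v where v: "{w, v} \<in> E"
    using assms(2,3) edge_at_w unfolding no_isolated_def by blast
  have "nbrs E w \<subseteq> V"
    using simple_graph_edgeD[OF G] by (auto simp: nbrs_def)
  then have "finite (nbrs E w)"
    using G finite_subset unfolding simple_graph_def by blast
  moreover have "card (nbrs E w) \<le> Suc 0"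
    using assms(4) by (simp add: degree_def)
  moreover have "v \<in> nbrs E w" using v by (simp add: nbrs_def insert_commute)
  ultimately have nbrs_w: "nbrs E w = {v}"
    using card_le_Suc0_iff_eq by blast
  have "e = {w, v}" if e: "e \<in> E" "w \<in> e" for e
  proof -
    obtain v' where "e = {w, v'}" using edge_at_w[OF e] ..
    then have "v' \<in> nbrs E w" using e(1) by (simp add: nbrs_def insert_commute)
    then show ?thesis using \<open>e = {w, v'}\<close> nbrs_w by simp
  qed
  with v show ?thesis using that by blast
qed

lemma H43_free_pendant_extension:
  assumes "H43_free V E" "V' \<subseteq> V"
    and pendant: "\<And>e. e \<in> E' \<Longrightarrow> w \<in> e \<Longrightarrow> e = {w, u}"
    and old: "\<And>e. e \<in> E' \<Longrightarrow> w \<notin> e \<Longrightarrow> e \<in> E"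
  shows "H43_free V' E'"
  unfolding H43_free_def contains_H43_def
proof
  assume "\<exists>c a1 a2 a3 b1 b2.
     distinct [c, a1, a2, a3, b1, b2] \<and> set [c, a1, a2, a3, b1, b2] \<subseteq> V' \<and>
     {c, a1} \<in> E' \<and> {a1, a2} \<in> E' \<and> {a2, a3} \<in> E' \<and> {a3, c} \<in> E' \<and>
     {c, b1} \<in> E' \<and> {b1, b2} \<in> E' \<and> {b2, c} \<in> E'"
  then obtain c a1 a2 a3 b1 b2 where H:
     "distinct [c, a1, a2, a3, b1, b2]" "set [c, a1, a2, a3, b1, b2] \<subseteq> V'"
     "{c, a1} \<in> E'" "{a1, a2} \<in> E'" "{a2, a3} \<in> E'" "{a3, c} \<in> E'"
     "{c, b1} \<in> E'" "{b1, b2} \<in> E'" "{b2, c} \<in> E'" by blast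
  have not_w: "p \<noteq> w" if "{p, q} \<in> E'" "{p, r} \<in> E'" "q \<noteq> r" for p q r
  proof
    assume "p = w"
    then have "{p, q} = {w, u}" "{p, r} = {w, u}" using pendant that(1,2) by auto
    then show False using that(3) by (auto simp: doubleton_eq_iff)
  qed
  have "c \<noteq> w" using not_w[OF H(3) H(7)] H(1) by simp
  moreover have "a1 \<noteq> w" using not_w[of a1 c a2] H(1,3,4) by (simp add: insert_commute)
  moreover have "a2 \<noteq> w" using not_w[of a2 a1 a3] H(1,4,5) by (simp add: insert_commute)
  moreover have "a3 \<noteq> w" using not_w[of a3 c a2] H(1,5,6) by (simp add: insert_commute)
  moreover have "b1 \<noteq> w" using not_w[of b1 c b2] H(1,7,8) by (simp add: insert_commute)
  moreover have "b2 \<noteq> w" using not_w[of b2 c b1] H(1,8,9) by (simp add: insert_commute)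
  ultimately have "{c, a1} \<in> E" "{a1, a2} \<in> E" "{a2, a3} \<in> E" "{a3, c} \<in> E"
    "{c, b1} \<in> E" "{b1, b2} \<in> E" "{b2, c} \<in> E"
    using old H(3-9) by simp_all
  moreover have "set [c, a1, a2, a3, b1, b2] \<subseteq> V" using H(2) assms(2) by blast
  ultimately have "contains_H43 V E"
    unfolding contains_H43_def using H(1) by blast
  then show False using assms(1) by (simp add: H43_free_def)
qed

lemma rotate_pendant_edge_admissible:
  assumes adm: "admissible m V E"
    and wv: "{w, v} \<in> E" and pendant: "\<And>e. e \<in> E \<Longrightarrow> w \<in> e \<Longrightarrow> e = {w, v}"
    and wu: "{w, u} \<notin> E" "u \<in> V" "u \<noteq> w"
  shows "admissible m (nonisolated_vertices V (rotate_edge E w v u)) (rotate_edge E w v u)"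
proof -
  let ?E' = "rotate_edge E w v u" and ?V' = "nonisolated_vertices V (rotate_edge E w v u)"
  have G: "simple_graph V E" and "card E = m" "H43_free V E"
    using adm by (auto simp: admissible_def)
  have "w \<in> V" using simple_graph_edgeD[OF G wv] by simp
  have "simple_graph ?V' ?E'"
    unfolding simple_graph_def
  proof (intro conjI ballI)
    show "finite ?V'" using G by (simp add: simple_graph_def nonisolated_vertices_def)
    fix e assume "e \<in> ?E'"
    obtain p q where "e = {p, q}" "p \<noteq> q" "p \<in> V" "q \<in> V"
    proof (cases "e = {w, u}")
      case True
      then show ?thesis using that wu \<open>w \<in> V\<close> by blast
    next
      case False
      then have "e \<in> E" using \<open>e \<in> ?E'\<close> by (simp add: rotate_edge_def)
      then show ?thesis using that G by (auto simp: simple_graph_def)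
    qed
    moreover have "p \<in> ?V'" "q \<in> ?V'"
      using \<open>e \<in> ?E'\<close> calculation unfolding nonisolated_vertices_def by blast+
    ultimately show "\<exists>p q. e = {p, q} \<and> p \<noteq> q \<and> p \<in> ?V' \<and> q \<in> ?V'"
      by blast
  qed
  moreover have "card ?E' = m"
  proof -
    have "finite E" using simple_graph_finite_edges[OF G] .
    then have "card ?E' = Suc (card (E - {{w, v}}))"
      using wu(1) by (simp add: rotate_edge_def)
    also have "\<dots> = card E" using \<open>finite E\<close> wv by (rule card_Suc_Diff1)
    finally show ?thesis using \<open>card E = m\<close> by simp
  qed
  moreover have "no_isolated ?V' ?E'"
    by (auto simp: no_isolated_def nonisolated_vertices_def)
  moreover have "H43_free ?V' ?E'"
    using pendant by (intro H43_free_pendant_extension[OF \<open>H43_free V E\<close>, where w = w and u = u])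
      (auto simp: nonisolated_vertices_def rotate_edge_def)
  ultimately show ?thesis by (simp add: admissible_def)
qed

theorem mainTheorem4:
  fixes m :: nat and V :: "nat set" and E :: "nat set set"
    and x :: "nat \<Rightarrow> real" and ustar :: nat
  assumes "m \<ge> 38"
    and "admissible m V E"
    and "\<forall>V' E'. admissible m V' E' \<longrightarrow> spectral_radius V' E' \<le> spectral_radius V E"
    and "perron_vector V E x"
    and "ustar \<in> V"
    and "\<forall>u\<in>V. x u \<le> x ustar"
  shows "\<forall>w \<in> V - closed_nbrs E ustar. degree E w \<ge> 2"
proof (rule ccontr)
  assume "\<not> ?thesis"
  then obtain w where "w \<in> V" and w_far: "w \<notin> closed_nbrs E ustar" and "degree E w < 2"
    by auto
  have G: "simple_graph V E" and "no_isolated V E"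
    using assms(2) by (auto simp: admissible_def)
  obtain v where wv: "{w, v} \<in> E" and pendant: "\<And>e. e \<in> E \<Longrightarrow> w \<in> e \<Longrightarrow> e = {w, v}"
    using pendant_vertex_edge[OF G \<open>no_isolated V E\<close> \<open>w \<in> V\<close> \<open>degree E w < 2\<close>] by blast
  have wu: "{w, ustar} \<notin> E" "ustar \<noteq> w"
    using w_far by (auto simp: closed_nbrs_def nbrs_def)
  have "x v \<le> x ustar" using assms(6) simple_graph_edgeD[OF G wv] by simp
  then have "spectral_radius V E
      < spectral_radius (nonisolated_vertices V (rotate_edge E w v ustar)) (rotate_edge E w v ustar)"
    using spectral_radius_rotate_edge_less[OF G assms(4) wv wu(1) assms(5) wu(2)] by blast
  moreover have "admissible m (nonisolated_vertices V (rotate_edge E w v ustar)) (rotate_edge E w v ustar)"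
    using rotate_pendant_edge_admissible[OF assms(2) wv pendant wu(1) assms(5) wu(2)] .
  ultimately show False using assms(3) by (meson not_le)
qed

end
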